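(* Consider the two-species BGK system and its mild solutions as described in the context. If $(f_1,f_2)$ is a mild solution with $f_1,f_2\ge0$ and the initial data satisfy $$\gamma_k(x,t):=\int f_k^0(x-vt,v)\,dv\ge C_0>0$$ for all $t\ge0$ (and all $x$), $k=1,2$, with a constant $C_0>0$, then the densities satisfy, for all $t\ge0$, $x$, and $k\neq j\in\{1,2\}$, $$n_k(x,t)\ge C_0e^{-(\tilde\nu_{kk}+\tilde\nu_{kj})t}.$$
   Context: Fix $N\ge1$, masses $m_1,m_2>0$, $\varepsilon\in(0,1]$, $\alpha\in[0,1]$, $\delta$ with $\frac{\frac{m_1}{m_2}\varepsilon-1}{1+\frac{m_1}{m_2}\varepsilon}\le\delta\le 1$, and $\gamma$ with $0\le\gamma\le\frac{m_1}{N}(1-\delta)\big[(1+\frac{m_1}{m_2}\varepsilon)\delta+1-\frac{m_1}{m_2}\varepsilon\big]$, and constants $\tilde\nu_{11},\tilde\nu_{12},\tilde\nu_{21},\tilde\nu_{22}>0$. For $f_k(x,v,t)\ge0$ define $n_k=\int f_k\,dv$, $n_ku_k=\int vf_k\,dv$, $Nn_kT_k=\int m_k|v-u_k|^2f_k\,dv$, and $u_{12}=\delta u_1+(1-\delta)u_2$, $u_{21}=u_2-\frac{m_1}{m_2}\varepsilon(1-\delta)(u_2-u_1)$, $T_{12}=\alpha T_1+(1-\alpha)T_2+\gamma|u_1-u_2|^2$, $T_{21}=\big[\frac1N\varepsilon m_1(1-\delta)(\frac{m_1}{m_2}\varepsilon(\delta-1)+\delta+1)-\varepsilon\gamma\big]|u_1-u_2|^2+\varepsilon(1-\alpha)T_1+(1-\varepsilon(1-\alpha))T_2$.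 Maxwellians: $M_k=\frac{n_k}{(2\pi T_k/m_k)^{N/2}}e^{-\frac{|v-u_k|^2}{2T_k/m_k}}$, $M_{12}=\frac{n_1}{(2\pi T_{12}/m_1)^{N/2}}e^{-\frac{|v-u_{12}|^2}{2T_{12}/m_1}}$, $M_{21}=\frac{n_2}{(2\pi T_{21}/m_2)^{N/2}}e^{-\frac{|v-u_{21}|^2}{2T_{21}/m_2}}$. The system, with collision frequencies $\nu_{jk}n_k=\tilde\nu_{jk}\frac{n_k}{n_1+n_2}$, is $\partial_tf_1+v\cdot\nabla_xf_1=\nu_{11}n_1(M_1-f_1)+\nu_{12}n_2(M_{12}-f_1)$, $\partial_tf_2+v\cdot\nabla_xf_2=\nu_{22}n_2(M_2-f_2)+\nu_{21}n_1(M_{21}-f_2)$, $f_k(t=0)=f_k^0$. Mild solution: $(f_1,f_2)$ with $f_k\ge0$, $(1+|v|^2)f_k\in L^1$, such that for $k\neq j$, writing $\rho_k=\frac{n_k}{n_1+n_2}$ and $y_s=x+(s-t)v$, $f_k(x,v,t)=e^{-a_k(x,v,t)}f_k^0(x-tv,v)+e^{-a_k(x,v,t)}\int_0^t\big[\tilde\nu_{kk}\rho_k(y_s,s)M_k(y_s,v,s)+\tilde\nu_{kj}\rho_j(y_s,s)M_{kj}(y_s,v,s)\big]e^{a_k(y_s,v,s)}\,ds$, where $a_k(x,v,t)=\int_0^t\big[\tilde\nu_{kk}\rho_k(y_s,s)+\tilde\nu_{kj}\rho_j(y_s,s)\big]ds$. *)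

theory Defs
  imports "HOL-Analysis.Analysis"
begin

text \<open>Distribution functions are written f x v t with x, v in real^'n (N = CARD('n)).\<close>

type_synonym 'n distr = "real^'n \<Rightarrow> real^'n \<Rightarrow> real \<Rightarrow> real"

definition ndens :: "'n::finite distr \<Rightarrow> real^'n \<Rightarrow> real \<Rightarrow> real" where
  "ndens f x t = (\<integral>v. f x v t \<partial>lborel)"

definition uvel :: "'n::finite distr \<Rightarrow> real^'n \<Rightarrow> real \<Rightarrow> real^'n" where
  "uvel f x t = inverse (ndens f x t) *\<^sub>R (\<integral>v. f x v t *\<^sub>R v \<partial>lborel)"

definition temp :: "real \<Rightarrow> 'n::finite distr \<Rightarrow> real^'n \<Rightarrow> real \<Rightarrow> real" where
  "temp m f x t = (\<integral>v. m * (norm (v - uvel f x t))\<^sup>2 * f x v t \<partial>lborel)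
                  / (real CARD('n) * ndens f x t)"

definition Maxwell :: "real \<Rightarrow> real \<Rightarrow> real^'n::finite \<Rightarrow> real \<Rightarrow> real^'n \<Rightarrow> real" where
  "Maxwell m n u T v = n / (2 * pi * T / m) powr (real CARD('n) / 2)
                       * exp (- (norm (v - u))\<^sup>2 / (2 * T / m))"

definition u12 :: "real \<Rightarrow> real^'n::finite \<Rightarrow> real^'n \<Rightarrow> real^'n" where
  "u12 \<delta> u1 u2 = \<delta> *\<^sub>R u1 + (1 - \<delta>) *\<^sub>R u2"

definition u21 :: "real \<Rightarrow> real \<Rightarrow> real \<Rightarrow> real \<Rightarrow> real^'n::finite \<Rightarrow> real^'n \<Rightarrow> real^'n" where
  "u21 m1 m2 \<epsilon> \<delta> u1 u2 = u2 - (m1 / m2 * \<epsilon> * (1 - \<delta>)) *\<^sub>R (u2 - u1)"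

definition T12 :: "real \<Rightarrow> real \<Rightarrow> real \<Rightarrow> real \<Rightarrow> real^'n::finite \<Rightarrow> real^'n \<Rightarrow> real" where
  "T12 \<alpha> \<gamma> T1 T2 u1 u2 = \<alpha> * T1 + (1 - \<alpha>) * T2 + \<gamma> * (norm (u1 - u2))\<^sup>2"

definition T21 :: "real \<Rightarrow> real \<Rightarrow> real \<Rightarrow> real \<Rightarrow> real \<Rightarrow> real \<Rightarrow> real \<Rightarrow> real
                   \<Rightarrow> real^'n::finite \<Rightarrow> real^'n \<Rightarrow> real" where
  "T21 m1 m2 \<epsilon> \<alpha> \<delta> \<gamma> T1 T2 u1 u2 =
     (1 / real CARD('n) * \<epsilon> * m1 * (1 - \<delta>) * (m1 / m2 * \<epsilon> * (\<delta> - 1) + \<delta> + 1) - \<epsilon> * \<gamma>)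
       * (norm (u1 - u2))\<^sup>2
     + \<epsilon> * (1 - \<alpha>) * T1 + (1 - \<epsilon> * (1 - \<alpha>)) * T2"

definition rho :: "'n::finite distr \<Rightarrow> 'n distr \<Rightarrow> real^'n \<Rightarrow> real \<Rightarrow> real" where
  "rho f g x t = ndens f x t / (ndens f x t + ndens g x t)"

definition acoef :: "real \<Rightarrow> real \<Rightarrow> 'n::finite distr \<Rightarrow> 'n distr \<Rightarrow> real^'n \<Rightarrow> real^'n \<Rightarrow> real \<Rightarrow> real" where
  "acoef \<nu>kk \<nu>kj f g x v t =
     (LINT s:{0..t}|lborel. \<nu>kk * rho f g (x + (s - t) *\<^sub>R v) s + \<nu>kj * rho g f (x + (s - t) *\<^sub>R v) s)"

text \<open>Mild formulation for one species: f own distribution, g partner, f0 initial datum,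
  Mk, Mkj the Maxwellians (as functions of x v t).\<close>
definition mild_eq :: "real \<Rightarrow> real \<Rightarrow> 'n::finite distr \<Rightarrow> 'n distr \<Rightarrow> (real^'n \<Rightarrow> real^'n \<Rightarrow> real)
                       \<Rightarrow> 'n distr \<Rightarrow> 'n distr \<Rightarrow> bool" where
  "mild_eq \<nu>kk \<nu>kj f g f0 Mk Mkj \<longleftrightarrow>
    (\<forall>x v t. t \<ge> 0 \<longrightarrow>
       f x v t = exp (- acoef \<nu>kk \<nu>kj f g x v t) * f0 (x - t *\<^sub>R v) v
         + exp (- acoef \<nu>kk \<nu>kj f g x v t) *
           (LINT s:{0..t}|lborel.
              (\<nu>kk * rho f g (x + (s - t) *\<^sub>R v) s * Mk (x + (s - t) *\<^sub>R v) v s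
               + \<nu>kj * rho g f (x + (s - t) *\<^sub>R v) s * Mkj (x + (s - t) *\<^sub>R v) v s)
              * exp (acoef \<nu>kk \<nu>kj f g (x + (s - t) *\<^sub>R v) v s)))"

definition mild_solution ::
  "real \<Rightarrow> real \<Rightarrow> real \<Rightarrow> real \<Rightarrow> real \<Rightarrow> real \<Rightarrow> real \<Rightarrow> real \<Rightarrow> real \<Rightarrow> real \<Rightarrow>
   (real^'n::finite \<Rightarrow> real^'n \<Rightarrow> real) \<Rightarrow> (real^'n \<Rightarrow> real^'n \<Rightarrow> real) \<Rightarrow>
   'n distr \<Rightarrow> 'n distr \<Rightarrow> bool" where
  "mild_solution m1 m2 \<epsilon> \<alpha> \<delta> \<gamma> \<nu>11 \<nu>12 \<nu>21 \<nu>22 f10 f20 f1 f2 \<longleftrightarrow>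
    (\<forall>x v t. t \<ge> 0 \<longrightarrow> f1 x v t \<ge> 0 \<and> f2 x v t \<ge> 0) \<and>
    (\<forall>x t. t \<ge> 0 \<longrightarrow> integrable lborel (\<lambda>v. (1 + (norm v)\<^sup>2) * f1 x v t)
                    \<and> integrable lborel (\<lambda>v. (1 + (norm v)\<^sup>2) * f2 x v t)) \<and>
    mild_eq \<nu>11 \<nu>12 f1 f2 f10
      (\<lambda>x v t. Maxwell m1 (ndens f1 x t) (uvel f1 x t) (temp m1 f1 x t) v)
      (\<lambda>x v t. Maxwell m1 (ndens f1 x t) (u12 \<delta> (uvel f1 x t) (uvel f2 x t))
                 (T12 \<alpha> \<gamma> (temp m1 f1 x t) (temp m2 f2 x t) (uvel f1 x t) (uvel f2 x t)) v) \<and>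
    mild_eq \<nu>22 \<nu>21 f2 f1 f20
      (\<lambda>x v t. Maxwell m2 (ndens f2 x t) (uvel f2 x t) (temp m2 f2 x t) v)
      (\<lambda>x v t. Maxwell m2 (ndens f2 x t) (u21 m1 m2 \<epsilon> \<delta> (uvel f1 x t) (uvel f2 x t))
                 (T21 m1 m2 \<epsilon> \<alpha> \<delta> \<gamma> (temp m1 f1 x t) (temp m2 f2 x t) (uvel f1 x t) (uvel f2 x t)) v)"

end

theory Submission
  imports Defs
begin

text \<open>Along each characteristic the mild formulation writes f_k as the initial datum damped by
  e^{-a_k} plus a Duhamel gain term. The gain term is nonnegative, and since the density ratios
  rho lie in [0,1] the damping exponent satisfies a_k \<le> (\<nu>_kk + \<nu>_kj) t. Hence
  f_k(x,v,t) \<ge> e^{-(\<nu>_kk + \<nu>_kj) t} f_k^0(x - tv, v) pointwise, and integrating in v gives the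
  bound.\<close>

lemma ndens_nonneg:
  assumes "\<And>v. f x v t \<ge> 0"
  shows "ndens f x t \<ge> 0"
  unfolding ndens_def using assms by (intro integral_nonneg_AE) auto

lemma rho_nonneg:
  assumes "ndens f x t \<ge> 0" "ndens g x t \<ge> 0"
  shows "rho f g x t \<ge> 0"
  using assms unfolding rho_def by simp

lemma rho_le_one:
  assumes "ndens f x t \<ge> 0" "ndens g x t \<ge> 0"
  shows "rho f g x t \<le> 1"
  using assms unfolding rho_def
  by (cases "ndens f x t + ndens g x t = 0") (auto simp: divide_simps)

lemma Maxwell_nonneg:
  assumes "n \<ge> 0"
  shows "Maxwell m n u T v \<ge> 0"
  unfolding Maxwell_def using assms by simp

lemma set_integral_nonneg:
  fixes h :: "real \<Rightarrow> real"
  assumes "\<And>s. s \<in> A \<Longrightarrow> 0 \<le> h s"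
  shows "0 \<le> (LINT s:A|lborel. h s)"
  unfolding set_lebesgue_integral_def
  using assms by (intro integral_nonneg_AE AE_I2) (simp add: indicator_def)

lemma set_integral_Icc_le_const:
  fixes h :: "real \<Rightarrow> real"
  assumes "0 \<le> t" "0 \<le> c" "\<And>s. s \<in> {0..t} \<Longrightarrow> h s \<le> c"
  shows "(LINT s:{0..t}|lborel. h s) \<le> c * t"
proof -
  have "(LINT s:{0..t}|lborel. h s) \<le> (\<integral>s. indicator {0..t} s *\<^sub>R c \<partial>lborel)"
    unfolding set_lebesgue_integral_def
  proof (rule integral_mono')
    show "integrable lborel (\<lambda>s. indicator {0..t} s *\<^sub>R c)"
      using \<open>0 \<le> t\<close>
      by (intro integrable_scaleR_left integrable_real_indicator) (auto simp: emeasure_lborel_Icc)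
  qed (use assms in \<open>auto simp: indicator_def\<close>)
  also have "\<dots> = c * t"
    using \<open>0 \<le> t\<close> by simp
  finally show ?thesis .
qed

lemma acoef_le:
  assumes "0 \<le> a" "0 \<le> b" "0 \<le> t"
    and nonneg: "\<And>y s. 0 \<le> s \<Longrightarrow> ndens f y s \<ge> 0 \<and> ndens g y s \<ge> 0"
  shows "acoef a b f g x v t \<le> (a + b) * t"
  unfolding acoef_def
proof (rule set_integral_Icc_le_const)
  fix s assume "s \<in> {0..t}"
  with nonneg have "rho f g (x + (s - t) *\<^sub>R v) s \<le> 1" "rho g f (x + (s - t) *\<^sub>R v) s \<le> 1"
    by (simp_all add: rho_le_one)
  with \<open>0 \<le> a\<close> \<open>0 \<le> b\<close>
  show "a * rho f g (x + (s - t) *\<^sub>R v) s + b * rho g f (x + (s - t) *\<^sub>R v) s \<le> a + b"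
    by (intro add_mono) (simp_all add: mult_left_le)
qed (use assms in auto)

lemma mild_eq_ge_damped_initial:
  assumes mild: "mild_eq a b f g f_init Mk Mkj"
    and "0 \<le> a" "0 \<le> b" "0 \<le> t"
    and nonneg: "\<And>y w s. 0 \<le> s \<Longrightarrow> f y w s \<ge> 0 \<and> g y w s \<ge> 0"
    and Maxwellians_nonneg: "\<And>y w s. 0 \<le> s \<Longrightarrow> Mk y w s \<ge> 0 \<and> Mkj y w s \<ge> 0"
  shows "exp (- (a + b) * t) * f_init (x - t *\<^sub>R v) v \<le> f x v t"
proof (cases "f_init (x - t *\<^sub>R v) v \<ge> 0")
  case True
  define A where "A = acoef a b f g x v t"
  define gain where "gain = (LINT s:{0..t}|lborel.
      (a * rho f g (x + (s - t) *\<^sub>R v) s * Mk (x + (s - t) *\<^sub>R v) v s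
       + b * rho g f (x + (s - t) *\<^sub>R v) s * Mkj (x + (s - t) *\<^sub>R v) v s)
      * exp (acoef a b f g (x + (s - t) *\<^sub>R v) v s))"
  have duhamel: "f x v t = exp (- A) * f_init (x - t *\<^sub>R v) v + exp (- A) * gain"
    using mild \<open>0 \<le> t\<close> unfolding mild_eq_def A_def gain_def by blast
  have densities_nonneg: "ndens f y s \<ge> 0 \<and> ndens g y s \<ge> 0" if "0 \<le> s" for y s
    using nonneg[OF that] by (simp add: ndens_nonneg)
  have "0 \<le> gain"
    unfolding gain_def using densities_nonneg Maxwellians_nonneg \<open>0 \<le> a\<close> \<open>0 \<le> b\<close>
    by (intro set_integral_nonneg) (simp add: rho_nonneg)
  have "A \<le> (a + b) * t"
    unfolding A_def using assms(2-4) densities_nonneg by (rule acoef_le)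
  then have "exp (- (a + b) * t) \<le> exp (- A)"
    by (simp add: algebra_simps)
  then have "exp (- (a + b) * t) * f_init (x - t *\<^sub>R v) v \<le> exp (- A) * f_init (x - t *\<^sub>R v) v"
    using True by (rule mult_right_mono)
  also have "\<dots> \<le> f x v t"
    using duhamel \<open>0 \<le> gain\<close> by simp
  finally show ?thesis .
next
  case False
  then have "exp (- (a + b) * t) * f_init (x - t *\<^sub>R v) v \<le> 0"
    by (simp add: mult_nonneg_nonpos)
  also have "0 \<le> f x v t"
    using nonneg \<open>0 \<le> t\<close> by blast
  finally show ?thesis .
qed

lemma integrable_of_weighted:
  fixes f w :: "'a \<Rightarrow> real"
  assumes int: "integrable M (\<lambda>x. w x * f x)"
    and w: "w \<in> borel_measurable M" "\<And>x. 1 \<le> w x"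
  shows "integrable M f"
proof (rule Bochner_Integration.integrable_bound[OF int])
  have "w x \<noteq> 0" for x
    using w(2)[of x] by linarith
  then have "f = (\<lambda>x. inverse (w x) * (w x * f x))"
    by (simp add: fun_eq_iff)
  also have "\<dots> \<in> borel_measurable M"
    using w(1) borel_measurable_integrable[OF int] by measurable
  finally show "f \<in> borel_measurable M" .
  have "\<bar>f x\<bar> \<le> \<bar>w x\<bar> * \<bar>f x\<bar>" for x
    using w(2)[of x] by (simp add: mult_le_cancel_right1)
  then show "AE x in M. norm (f x) \<le> norm (w x * f x)"
    by (simp add: abs_mult)
qed

lemma ndens_mild_lower_bound:
  assumes mild: "mild_eq a b f g f_init Mk Mkj"
    and "0 \<le> a" "0 \<le> b" "0 \<le> t"
    and nonneg: "\<And>y w s. 0 \<le> s \<Longrightarrow> f y w s \<ge> 0 \<and> g y w s \<ge> 0"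
    and Maxwellians_nonneg: "\<And>y w s. 0 \<le> s \<Longrightarrow> Mk y w s \<ge> 0 \<and> Mkj y w s \<ge> 0"
    and moments: "integrable lborel (\<lambda>v. (1 + (norm v)\<^sup>2) * f x v t)"
    and "0 < C0" and initial: "C0 \<le> (\<integral>v. f_init (x - t *\<^sub>R v) v \<partial>lborel)"
  shows "C0 * exp (- (a + b) * t) \<le> ndens f x t"
proof -
  have "integrable lborel (\<lambda>v. f_init (x - t *\<^sub>R v) v)"
    using \<open>0 < C0\<close> initial not_integrable_integral_eq by fastforce
  moreover have "integrable lborel (\<lambda>v. f x v t)"
    using moments by (rule integrable_of_weighted) auto
  ultimately have "(\<integral>v. exp (- (a + b) * t) * f_init (x - t *\<^sub>R v) v \<partial>lborel) \<le> ndens f x t"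
    unfolding ndens_def using mild_eq_ge_damped_initial[OF assms(1-6)]
    by (intro integral_mono) auto
  have "C0 * exp (- (a + b) * t) \<le> exp (- (a + b) * t) * (\<integral>v. f_init (x - t *\<^sub>R v) v \<partial>lborel)"
    using initial by (simp add: mult.commute)
  also have "\<dots> = (\<integral>v. exp (- (a + b) * t) * f_init (x - t *\<^sub>R v) v \<partial>lborel)"
    by simp
  also have "\<dots> \<le> ndens f x t"
    by fact
  finally show ?thesis .
qed

theorem mainTheorem7:
  fixes m1 m2 \<epsilon> \<alpha> \<delta> \<gamma> \<nu>11 \<nu>12 \<nu>21 \<nu>22 C0 :: real
    and f10 f20 :: "real^'n::finite \<Rightarrow> real^'n \<Rightarrow> real"
    and f1 f2 :: "real^'n \<Rightarrow> real^'n \<Rightarrow> real \<Rightarrow> real"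
  assumes "m1 > 0" and "m2 > 0"
    and "0 < \<epsilon>" and "\<epsilon> \<le> 1"
    and "0 \<le> \<alpha>" and "\<alpha> \<le> 1"
    and "(m1 / m2 * \<epsilon> - 1) / (1 + m1 / m2 * \<epsilon>) \<le> \<delta>" and "\<delta> \<le> 1"
    and "0 \<le> \<gamma>"
    and "\<gamma> \<le> m1 / real CARD('n) * (1 - \<delta>) * ((1 + m1 / m2 * \<epsilon>) * \<delta> + 1 - m1 / m2 * \<epsilon>)"
    and "\<nu>11 > 0" and "\<nu>12 > 0" and "\<nu>21 > 0" and "\<nu>22 > 0"
    and "mild_solution m1 m2 \<epsilon> \<alpha> \<delta> \<gamma> \<nu>11 \<nu>12 \<nu>21 \<nu>22 f10 f20 f1 f2"
    and "C0 > 0"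
    and "\<forall>x t. t \<ge> 0 \<longrightarrow> (\<integral>v. f10 (x - t *\<^sub>R v) v \<partial>lborel) \<ge> C0"
    and "\<forall>x t. t \<ge> 0 \<longrightarrow> (\<integral>v. f20 (x - t *\<^sub>R v) v \<partial>lborel) \<ge> C0"
  shows "\<forall>x t. t \<ge> 0 \<longrightarrow>
           ndens f1 x t \<ge> C0 * exp (- (\<nu>11 + \<nu>12) * t) \<and>
           ndens f2 x t \<ge> C0 * exp (- (\<nu>22 + \<nu>21) * t)"
proof (intro allI impI conjI)
  fix x :: "real^'n" and t :: real
  assume "0 \<le> t"
  note solution = \<open>mild_solution m1 m2 \<epsilon> \<alpha> \<delta> \<gamma> \<nu>11 \<nu>12 \<nu>21 \<nu>22 f10 f20 f1 f2\<close>[unfolded mild_solution_def]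
  note mild1 = solution[THEN conjunct2, THEN conjunct2, THEN conjunct1]
  note mild2 = solution[THEN conjunct2, THEN conjunct2, THEN conjunct2]
  from solution have nonneg: "\<And>y w s. 0 \<le> s \<Longrightarrow> f1 y w s \<ge> 0 \<and> f2 y w s \<ge> 0"
    by blast
  then have densities_nonneg: "\<And>y s. 0 \<le> s \<Longrightarrow> ndens f1 y s \<ge> 0 \<and> ndens f2 y s \<ge> 0"
    by (simp add: ndens_nonneg)
  show "C0 * exp (- (\<nu>11 + \<nu>12) * t) \<le> ndens f1 x t"
    by (rule ndens_mild_lower_bound[OF mild1])
      (use solution nonneg densities_nonneg assms \<open>0 \<le> t\<close> in \<open>auto simp: Maxwell_nonneg\<close>)
  show "C0 * exp (- (\<nu>22 + \<nu>21) * t) \<le> ndens f2 x t"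
    by (rule ndens_mild_lower_bound[OF mild2])
      (use solution nonneg densities_nonneg assms \<open>0 \<le> t\<close> in \<open>auto simp: Maxwell_nonneg\<close>)
qed

end
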